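(* Let $f:\mathbb{Z}\to\mathbb{R}$ be a function of bounded variation, i.e. $\mathrm{Var}(f)=\sum_{n\in\mathbb{Z}}|f(n+1)-f(n)|<\infty$. Then $$\mathrm{Var}(\widetilde{M}f)\le \mathrm{Var}(f),$$ and the constant $1$ is best possible: there is no constant $C<1$ such that $\mathrm{Var}(\widetilde{M}f)\le C\,\mathrm{Var}(f)$ holds for all functions $f:\mathbb{Z}\to\mathbb{R}$ of bounded variation.
   Context: Let $\mathbb{Z}^+=\{0,1,2,\dots\}$. For $f:\mathbb{Z}\to\mathbb{R}$, the discrete non-centered Hardy–Littlewood maximal operator is $$\widetilde{M}f(n)=\sup_{r,s\in\mathbb{Z}^+}\frac{1}{r+s+1}\sum_{k=-r}^{s}|f(n+k)|,\qquad n\in\mathbb{Z}.$$ The total variation of $g:\mathbb{Z}\to\mathbb{R}$ is $\mathrm{Var}(g)=\sum_{n=-\infty}^{\infty}|g(n+1)-g(n)|$. *)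

theory Defs
  imports "HOL-Analysis.Analysis"
begin

definition ncmax :: "(int \<Rightarrow> real) \<Rightarrow> int \<Rightarrow> real" where
  "ncmax f n = (SUP rs \<in> (UNIV :: (nat \<times> nat) set).
      (\<Sum>k = - int (fst rs) .. int (snd rs). \<bar>f (n + k)\<bar>) / real (fst rs + snd rs + 1))"

definition Var :: "(int \<Rightarrow> real) \<Rightarrow> ennreal" where
  "Var g = (\<integral>\<^sup>+ n. ennreal \<bar>g (n + 1) - g n\<bar> \<partial>count_space UNIV)"

end

theory Submission
  imports Defs
begin

text \<open>
  Write \<open>Mf\<close> for \<open>ncmax f\<close> and \<open>L q\<close>, \<open>R q\<close> for the variation of \<open>f\<close> to the left and to
  the right of \<open>q\<close>, so that \<open>L q + R q \<le> Var f\<close>. A window not containing \<open>q\<close> only sees values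
  of \<open>\<bar>f\<bar>\<close> within \<open>L q\<close> resp. \<open>R q\<close> of \<open>\<bar>f q\<bar> \<le> Mf q\<close>; hence \<open>Mf a \<le> Mf q + L q\<close> for
  \<open>a \<le> q\<close> and \<open>Mf b \<le> Mf m + R m\<close> for \<open>m \<le> b\<close>. Moreover every strict local maximum of \<open>Mf\<close>
  is dominated by a point \<open>p\<close> with \<open>Mf p = \<bar>f p\<bar>\<close>: a window around a maximiser either leaves
  the region where \<open>Mf\<close> is large or only averages values of \<open>\<bar>f\<bar>\<close> from inside it. Sweeping
  from left to right, each rise of \<open>Mf\<close> is therefore paid for by the variation of \<open>f\<close>
  accumulated up to the next peak, and the variation of \<open>Mf\<close> on every finite interval is at
  most \<open>Var f\<close>. For the unit impulse at \<open>0\<close>, \<open>Mf\<close> falls from \<open>1\<close> to \<open>1/(\<bar>n\<bar>+1)\<close> on both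
  sides, so the variation of \<open>Mf\<close> on \<open>[-N, N]\<close> tends to \<open>2 = Var f\<close>.
\<close>

definition var_ivl :: "(int \<Rightarrow> real) \<Rightarrow> int \<Rightarrow> int \<Rightarrow> real" where
  "var_ivl g a b = (\<Sum>n\<in>{a..<b}. \<bar>g (n + 1) - g n\<bar>)"

lemma var_ivl_nonneg: "0 \<le> var_ivl g a b"
  unfolding var_ivl_def by (auto intro: sum_nonneg)

lemma var_ivl_empty: "b \<le> a \<Longrightarrow> var_ivl g a b = 0"
  unfolding var_ivl_def by simp

lemma var_ivl_split:
  assumes "a \<le> m" "m \<le> b"
  shows "var_ivl g a m + var_ivl g m b = var_ivl g a b"
proof -
  have "{a..<b} = {a..<m} \<union> {m..<b}" using assms by auto
  then show ?thesis unfolding var_ivl_def by (simp add: sum.union_disjoint ivl_disj_int)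
qed

lemma var_ivl_add_one:
  assumes "a \<le> b"
  shows "var_ivl g a (b + 1) = var_ivl g a b + \<bar>g (b + 1) - g b\<bar>"
proof -
  have "{a..<b + 1} = insert b {a..<b}" using assms by auto
  then show ?thesis unfolding var_ivl_def by simp
qed

lemma abs_diff_le_var_ivl: "a \<le> b \<Longrightarrow> \<bar>g b - g a\<bar> \<le> var_ivl g a b"
proof (induction b rule: int_ge_induct)
  case (step b)
  then show ?case using var_ivl_add_one[OF step.hyps(1), of g] by linarith
qed (simp add: var_ivl_def)

lemma abs_le_abs_add_var_ivl:
  assumes "a \<le> b"
  shows "\<bar>g b\<bar> \<le> \<bar>g a\<bar> + var_ivl g a b" "\<bar>g a\<bar> \<le> \<bar>g b\<bar> + var_ivl g a b"
  using abs_diff_le_var_ivl[OF assms, of g] by linarith+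

lemma ennreal_var_ivl_le_Var: "ennreal (var_ivl g a b) \<le> Var g"
proof -
  have "ennreal (var_ivl g a b) = (\<Sum>n\<in>{a..<b}. ennreal \<bar>g (n + 1) - g n\<bar>)"
    unfolding var_ivl_def by (rule sum_ennreal[symmetric]) simp
  also have "\<dots> = (\<integral>\<^sup>+n. ennreal \<bar>g (n + 1) - g n\<bar> * indicator {a..<b} n \<partial>count_space UNIV)"
    by (simp add: nn_integral_count_space_indicator[symmetric] nn_integral_count_space_finite)
  also have "\<dots> \<le> Var g"
    unfolding Var_def by (intro nn_integral_mono) (auto split: split_indicator)
  finally show ?thesis .
qed

lemma var_ivl_le_Var:
  assumes "Var g < \<infinity>"
  shows "var_ivl g a b \<le> enn2real (Var g)"
proof -
  have "ennreal (var_ivl g a b) \<le> ennreal (enn2real (Var g))"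
    using ennreal_var_ivl_le_Var[of g a b] assms by simp
  then show ?thesis by (simp add: ennreal_le_iff[OF enn2real_nonneg])
qed

lemma Var_le_if_var_ivl_le:
  assumes "\<And>N::nat. var_ivl g (- int N) (int N) \<le> B"
  shows "Var g \<le> ennreal B"
proof -
  define \<phi> where "\<phi> n = ennreal \<bar>g (n + 1) - g n\<bar>" for n
  define F where "F = (\<lambda>N::nat. \<lambda>n. \<phi> n * indicator {- int N..<int N} n)"
  have \<phi>_eq: "\<phi> n = (SUP N. F N n)" for n
  proof (rule antisym)
    have "F (nat \<bar>n\<bar> + 1) n = \<phi> n" unfolding F_def by (auto split: split_indicator)
    then show "\<phi> n \<le> (SUP N. F N n)" by (metis SUP_upper UNIV_I)
    show "(SUP N. F N n) \<le> \<phi> n" unfolding F_def by (rule SUP_least) (auto split: split_indicator)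
  qed
  have "incseq F"
    unfolding F_def incseq_def le_fun_def by (auto split: split_indicator)
  have "Var g = (\<integral>\<^sup>+n. (SUP N. F N n) \<partial>count_space UNIV)"
    unfolding Var_def \<phi>_def[symmetric] by (subst \<phi>_eq) simp
  also have "\<dots> = (SUP N. integral\<^sup>N (count_space UNIV) (F N))"
    by (rule nn_integral_monotone_convergence_SUP[OF \<open>incseq F\<close>]) simp
  also have "\<dots> \<le> ennreal B"
  proof (rule SUP_least)
    fix N
    have "integral\<^sup>N (count_space UNIV) (F N) = (\<Sum>n\<in>{- int N..<int N}. \<phi> n)"
      by (simp add: F_def nn_integral_count_space_indicator[symmetric] nn_integral_count_space_finite)
    also have "\<dots> = ennreal (var_ivl g (- int N) (int N))"
      unfolding var_ivl_def \<phi>_def by (rule sum_ennreal) simp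
    also have "\<dots> \<le> ennreal B" using assms by (rule ennreal_leI)
    finally show "integral\<^sup>N (count_space UNIV) (F N) \<le> ennreal B" .
  qed
  finally show ?thesis .
qed

section \<open>The maximal function through windows\<close>

definition mean_abs :: "(int \<Rightarrow> real) \<Rightarrow> int \<Rightarrow> int \<Rightarrow> real" where
  "mean_abs f lo hi = (\<Sum>k = lo..hi. \<bar>f k\<bar>) / real_of_int (hi - lo + 1)"

lemma ncmax_summand_eq_mean_abs:
  "(\<Sum>k = - int r .. int s. \<bar>f (n + k)\<bar>) / real (r + s + 1) = mean_abs f (n - int r) (n + int s)"
proof -
  have "(\<Sum>k = - int r .. int s. \<bar>f (n + k)\<bar>) = (\<Sum>k \<in> (+) n ` {- int r .. int s}. \<bar>f k\<bar>)"
    by (subst sum.reindex) (auto simp: inj_on_def)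
  also have "(+) n ` {- int r .. int s} = {n - int r .. n + int s}"
    by (simp add: image_add_atLeastAtMost add.commute)
  finally show ?thesis unfolding mean_abs_def by simp
qed

lemma mean_abs_le:
  assumes "lo \<le> hi" "\<And>k. lo \<le> k \<Longrightarrow> k \<le> hi \<Longrightarrow> \<bar>f k\<bar> \<le> c"
  shows "mean_abs f lo hi \<le> c"
proof -
  have "(\<Sum>k = lo..hi. \<bar>f k\<bar>) \<le> of_nat (card {lo..hi}) * c"
    by (rule sum_bounded_above) (use assms in auto)
  also have "of_nat (card {lo..hi}) = real_of_int (hi - lo + 1)" using assms(1) by simp
  finally show ?thesis
    unfolding mean_abs_def using assms(1) by (simp add: divide_le_eq mult.commute)
qed

lemma ncmax_le_if_mean_abs_le:
  assumes "\<And>lo hi. lo \<le> n \<Longrightarrow> n \<le> hi \<Longrightarrow> mean_abs f lo hi \<le> c"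
  shows "ncmax f n \<le> c"
  unfolding ncmax_def
proof (rule cSUP_least)
  fix rs :: "nat \<times> nat"
  show "(\<Sum>k = - int (fst rs) .. int (snd rs). \<bar>f (n + k)\<bar>) / real (fst rs + snd rs + 1) \<le> c"
    unfolding ncmax_summand_eq_mean_abs by (rule assms) auto
qed simp

context
  fixes f :: "int \<Rightarrow> real"
  assumes bdd: "bdd_above (range (\<lambda>k. \<bar>f k\<bar>))"
begin

lemma ncmax_ge_mean_abs:
  assumes "lo \<le> n" "n \<le> hi"
  shows "mean_abs f lo hi \<le> ncmax f n"
proof -
  obtain M where M: "\<And>k. \<bar>f k\<bar> \<le> M" using bdd by (auto simp: bdd_above_def)
  let ?F = "\<lambda>rs::nat \<times> nat. (\<Sum>k = - int (fst rs) .. int (snd rs). \<bar>f (n + k)\<bar>) / real (fst rs + snd rs + 1)"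
  have "mean_abs f lo hi = ?F (nat (n - lo), nat (hi - n))"
    unfolding fst_conv snd_conv ncmax_summand_eq_mean_abs using assms by simp
  also have "\<dots> \<le> ncmax f n"
    unfolding ncmax_def
  proof (rule cSUP_upper[OF UNIV_I], rule bdd_aboveI2)
    fix rs :: "nat \<times> nat"
    show "?F rs \<le> M"
      unfolding ncmax_summand_eq_mean_abs by (rule mean_abs_le) (auto intro: M)
  qed
  finally show ?thesis .
qed

lemma abs_le_ncmax: "\<bar>f n\<bar> \<le> ncmax f n"
  using ncmax_ge_mean_abs[of n n n] by (simp add: mean_abs_def)

text \<open>A window around \<open>n \<in> {c..d}\<close> either stays inside \<open>{c..d}\<close> or contains \<open>c - 1\<close> or \<open>d + 1\<close>.\<close>

lemma ncmax_le_max_boundary: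
  assumes "n \<in> {c..d}" and "\<And>k. k \<in> {c..d} \<Longrightarrow> \<bar>f k\<bar> \<le> B"
  shows "ncmax f n \<le> max B (max (ncmax f (c - 1)) (ncmax f (d + 1)))"
proof (rule ncmax_le_if_mean_abs_le)
  fix lo hi assume window: "lo \<le> n" "n \<le> hi"
  consider "lo < c" | "d < hi" | "c \<le> lo" "hi \<le> d" by linarith
  then show "mean_abs f lo hi \<le> max B (max (ncmax f (c - 1)) (ncmax f (d + 1)))"
  proof cases
    case 1
    then have "mean_abs f lo hi \<le> ncmax f (c - 1)"
      using window assms(1) by (intro ncmax_ge_mean_abs) auto
    then show ?thesis by linarith
  next
    case 2
    then have "mean_abs f lo hi \<le> ncmax f (d + 1)"
      using window assms(1) by (intro ncmax_ge_mean_abs) auto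
    then show ?thesis by linarith
  next
    case 3
    then have "mean_abs f lo hi \<le> B"
      using window by (intro mean_abs_le assms(2)) auto
    then show ?thesis by linarith
  qed
qed

lemma ncmax_peak:
  assumes "n \<in> {c..d}" "ncmax f (c - 1) < ncmax f n" "ncmax f (d + 1) < ncmax f n"
  shows "\<exists>p\<in>{c..d}. ncmax f n \<le> ncmax f p \<and> ncmax f p = \<bar>f p\<bar>"
proof -
  have ne: "{c..d} \<noteq> {}" using assms(1) by auto
  define G where "G = Max (ncmax f ` {c..d})"
  define B where "B = Max ((\<lambda>k. \<bar>f k\<bar>) ` {c..d})"
  have "G \<in> ncmax f ` {c..d}" "B \<in> (\<lambda>k. \<bar>f k\<bar>) ` {c..d}"
    unfolding G_def B_def using ne by (auto intro!: Max_in)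
  then obtain m p where m: "m \<in> {c..d}" "ncmax f m = G" and p: "p \<in> {c..d}" "\<bar>f p\<bar> = B"
    by (metis imageE)
  have "ncmax f n \<le> G" unfolding G_def using assms(1) by simp
  moreover have "G \<le> max B (max (ncmax f (c - 1)) (ncmax f (d + 1)))"
    using ncmax_le_max_boundary[OF m(1), of B] m(2) unfolding B_def by simp
  ultimately have "G \<le> \<bar>f p\<bar>" using assms(2,3) p(2) by linarith
  moreover have "ncmax f p \<le> G" unfolding G_def using p(1) by simp
  ultimately show ?thesis
    using abs_le_ncmax[of p] \<open>ncmax f n \<le> G\<close> p(1) by (intro bexI[of _ p]) auto
qed

end

definition left_var :: "(int \<Rightarrow> real) \<Rightarrow> int \<Rightarrow> real" where
  "left_var f q = (SUP a\<in>{..q}. var_ivl f a q)"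

definition right_var :: "(int \<Rightarrow> real) \<Rightarrow> int \<Rightarrow> real" where
  "right_var f q = (SUP b\<in>{q..}. var_ivl f q b)"

text \<open>
  Bookkeeping for a left-to-right sweep over \<open>[a, b]\<close>: either the variation of \<open>Mf\<close>
  so far, together with the current value, is covered by \<open>left_var f q + Mf q\<close> at every later
  point \<open>q\<close>, or \<open>Mf\<close> has risen from some earlier value \<open>Mf m\<close> and the variation so far is
  covered by \<open>left_var f m\<close> plus that rise.
\<close>

definition ncmax_var_budget :: "(int \<Rightarrow> real) \<Rightarrow> int \<Rightarrow> int \<Rightarrow> bool" where
  "ncmax_var_budget f a b \<longleftrightarrow>
     (\<forall>q\<ge>b. var_ivl (ncmax f) a b + ncmax f b \<le> left_var f q + ncmax f q)
   \<or> (\<exists>m<b. ncmax f m < ncmax f b \<and>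
        var_ivl (ncmax f) a b + ncmax f m \<le> left_var f m + ncmax f b)"

locale bounded_variation =
  fixes f :: "int \<Rightarrow> real" and V :: real
  assumes var_ivl_bounded: "var_ivl f a b \<le> V"
begin

lemma abs_le_abs_0_add: "\<bar>f k\<bar> \<le> \<bar>f 0\<bar> + V"
proof (cases "0 \<le> k")
  case True
  then show ?thesis using abs_diff_le_var_ivl[of 0 k f] var_ivl_bounded[of 0 k] by linarith
next
  case False
  then show ?thesis using abs_diff_le_var_ivl[of k 0 f] var_ivl_bounded[of k 0] by linarith
qed

lemma bdd_above_abs: "bdd_above (range (\<lambda>k. \<bar>f k\<bar>))"
  by (rule bdd_aboveI2) (rule abs_le_abs_0_add)

lemmas ncmax_ge_mean_abs = ncmax_ge_mean_abs[OF bdd_above_abs]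
   and abs_le_ncmax = abs_le_ncmax[OF bdd_above_abs]
   and ncmax_peak = ncmax_peak[OF bdd_above_abs]

lemma var_ivl_le_left_var: "a \<le> q \<Longrightarrow> var_ivl f a q \<le> left_var f q"
  unfolding left_var_def by (rule cSUP_upper) (auto intro!: bdd_aboveI2 var_ivl_bounded)

lemma var_ivl_le_right_var: "q \<le> b \<Longrightarrow> var_ivl f q b \<le> right_var f q"
  unfolding right_var_def by (rule cSUP_upper) (auto intro!: bdd_aboveI2 var_ivl_bounded)

lemma left_var_nonneg: "0 \<le> left_var f q"
  using var_ivl_le_left_var[of q q] by (simp add: var_ivl_empty)

lemma right_var_nonneg: "0 \<le> right_var f q"
  using var_ivl_le_right_var[of q q] by (simp add: var_ivl_empty)

lemma left_var_add_var_ivl_le: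
  assumes "m \<le> p"
  shows "left_var f m + var_ivl f m p \<le> left_var f p"
proof -
  have "left_var f m \<le> left_var f p - var_ivl f m p"
    unfolding left_var_def[of f m]
  proof (rule cSUP_least)
    fix a assume "a \<in> {..m}"
    then have "var_ivl f a m + var_ivl f m p \<le> left_var f p"
      using assms var_ivl_le_left_var[of a p] by (simp add: var_ivl_split)
    then show "var_ivl f a m \<le> left_var f p - var_ivl f m p" by linarith
  qed simp
  then show ?thesis by linarith
qed

lemma left_var_add_right_var_le: "left_var f q + right_var f q \<le> V"
proof -
  have "left_var f q \<le> V - right_var f q"
    unfolding left_var_def[of f q]
  proof (rule cSUP_least)
    fix a assume a: "a \<in> {..q}"
    have "right_var f q \<le> V - var_ivl f a q"
      unfolding right_var_def
    proof (rule cSUP_least)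
      fix b assume "b \<in> {q..}"
      then have "var_ivl f a q + var_ivl f q b = var_ivl f a b" using a by (intro var_ivl_split) auto
      then show "var_ivl f q b \<le> V - var_ivl f a q" using var_ivl_bounded[of a b] by linarith
    qed simp
    then show "var_ivl f a q \<le> V - right_var f q" by linarith
  qed simp
  then show ?thesis by linarith
qed

lemma ncmax_le_ncmax_add_left_var:
  assumes "a \<le> q"
  shows "ncmax f a \<le> ncmax f q + left_var f q"
proof (rule ncmax_le_if_mean_abs_le)
  fix lo hi assume window: "lo \<le> a" "a \<le> hi"
  show "mean_abs f lo hi \<le> ncmax f q + left_var f q"
  proof (cases "q \<le> hi")
    case True
    then have "mean_abs f lo hi \<le> ncmax f q" using window assms by (intro ncmax_ge_mean_abs) auto
    then show ?thesis using left_var_nonneg[of q] by linarith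
  next
    case False
    show ?thesis
    proof (rule mean_abs_le)
      fix k assume "lo \<le> k" "k \<le> hi"
      then have "k \<le> q" using False by simp
      then show "\<bar>f k\<bar> \<le> ncmax f q + left_var f q"
        using abs_le_abs_add_var_ivl(2)[of k q f] abs_le_ncmax[of q] var_ivl_le_left_var[of k q]
        by linarith
    qed (use window in simp)
  qed
qed

lemma ncmax_le_ncmax_add_right_var:
  assumes "m \<le> b"
  shows "ncmax f b \<le> ncmax f m + right_var f m"
proof (rule ncmax_le_if_mean_abs_le)
  fix lo hi assume window: "lo \<le> b" "b \<le> hi"
  show "mean_abs f lo hi \<le> ncmax f m + right_var f m"
  proof (cases "lo \<le> m")
    case True
    then have "mean_abs f lo hi \<le> ncmax f m" using window assms by (intro ncmax_ge_mean_abs) auto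
    then show ?thesis using right_var_nonneg[of m] by linarith
  next
    case False
    show ?thesis
    proof (rule mean_abs_le)
      fix k assume "lo \<le> k" "k \<le> hi"
      then have "m \<le> k" using False by simp
      then show "\<bar>f k\<bar> \<le> ncmax f m + right_var f m"
        using abs_le_abs_add_var_ivl(1)[of m k f] abs_le_ncmax[of m] var_ivl_le_right_var[of m k]
        by linarith
    qed (use window in simp)
  qed
qed

lemma left_var_add_abs_mono:
  assumes "p \<le> q"
  shows "left_var f p + \<bar>f p\<bar> \<le> left_var f q + \<bar>f q\<bar>"
  using left_var_add_var_ivl_le[OF assms] abs_le_abs_add_var_ivl(2)[OF assms, of f] by linarith

lemma ncmax_var_budget_start: "ncmax_var_budget f a a"
  unfolding ncmax_var_budget_def
  using ncmax_le_ncmax_add_left_var by (auto simp: var_ivl_empty add.commute)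

lemma ncmax_var_budget_turn_down:
  assumes "m < b" "ncmax f m < ncmax f b"
    and "var_ivl (ncmax f) a b + ncmax f m \<le> left_var f m + ncmax f b"
    and "ncmax f (b + 1) < ncmax f b" "a \<le> b"
  shows "\<forall>q\<ge>b + 1. var_ivl (ncmax f) a (b + 1) + ncmax f (b + 1) \<le> left_var f q + ncmax f q"
proof (intro allI impI)
  fix q assume "b + 1 \<le> q"
  let ?g = "ncmax f"
  text \<open>The rise since \<open>m\<close> ends in a peak \<open>p\<close>, which is paid for by the variation of \<open>f\<close> on \<open>[m, p]\<close>.\<close>
  obtain p where p: "p \<in> {m + 1..b}" "?g b \<le> ?g p" "?g p = \<bar>f p\<bar>"
    using ncmax_peak[of b "m + 1" b] assms(1,2,4) by auto
  then have "m \<le> p" "p \<le> q" using \<open>b + 1 \<le> q\<close> by auto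
  have "\<bar>f p\<bar> \<le> ?g m + var_ivl f m p"
    using abs_le_abs_add_var_ivl(1)[OF \<open>m \<le> p\<close>, of f] abs_le_ncmax[of m] by linarith
  then have "var_ivl ?g a (b + 1) + ?g (b + 1) \<le> left_var f p + \<bar>f p\<bar>"
    using left_var_add_var_ivl_le[OF \<open>m \<le> p\<close>] var_ivl_add_one[OF assms(5), of ?g] assms(3,4) p(2,3)
    by linarith
  then show "var_ivl ?g a (b + 1) + ?g (b + 1) \<le> left_var f q + ?g q"
    using left_var_add_abs_mono[OF \<open>p \<le> q\<close>] abs_le_ncmax[of q] by linarith
qed

lemma ncmax_var_budget_step:
  assumes "a \<le> b" "ncmax_var_budget f a b"
  shows "ncmax_var_budget f a (b + 1)"
proof -
  let ?g = "ncmax f"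
  have var_step: "var_ivl ?g a (b + 1) = var_ivl ?g a b + \<bar>?g (b + 1) - ?g b\<bar>"
    using var_ivl_add_one[OF assms(1)] .
  from assms(2) consider
      (falling) "\<forall>q\<ge>b. var_ivl ?g a b + ?g b \<le> left_var f q + ?g q"
    | (rising) m where "m < b" "?g m < ?g b" "var_ivl ?g a b + ?g m \<le> left_var f m + ?g b"
    unfolding ncmax_var_budget_def by blast
  then show ?thesis
  proof cases
    case falling
    show ?thesis
    proof (cases "?g (b + 1) \<le> ?g b")
      case True
      show ?thesis unfolding ncmax_var_budget_def
      proof (intro disjI1 allI impI)
        fix q assume "b + 1 \<le> q"
        then have "var_ivl ?g a b + ?g b \<le> left_var f q + ?g q" using falling by simp
        then show "var_ivl ?g a (b + 1) + ?g (b + 1) \<le> left_var f q + ?g q"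
          using var_step True by linarith
      qed
    next
      case False
      have "var_ivl ?g a b + ?g b \<le> left_var f b + ?g b" using falling by blast
      then have "var_ivl ?g a (b + 1) + ?g b \<le> left_var f b + ?g (b + 1)"
        using var_step False by linarith
      then show ?thesis using False unfolding ncmax_var_budget_def by (intro disjI2 exI[of _ b]) auto
    qed
  next
    case rising
    show ?thesis
    proof (cases "?g b \<le> ?g (b + 1)")
      case True
      have "var_ivl ?g a (b + 1) + ?g m \<le> left_var f m + ?g (b + 1)"
        using rising(3) var_step True by linarith
      then show ?thesis
        using rising True unfolding ncmax_var_budget_def by (intro disjI2 exI[of _ m]) auto
    next
      case False
      then show ?thesis
        using ncmax_var_budget_turn_down[OF rising _ assms(1)] unfolding ncmax_var_budget_def by simp
    qed
  qed
qed

lemma var_ivl_ncmax_le: "var_ivl (ncmax f) a b \<le> V"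
proof (cases "a \<le> b")
  case False
  then show ?thesis using var_ivl_bounded[of 0 0] by (simp add: var_ivl_empty)
next
  case True
  then have "ncmax_var_budget f a b"
  proof (induction b rule: int_ge_induct)
    case base
    show ?case by (rule ncmax_var_budget_start)
  next
    case (step b)
    then show ?case by (rule ncmax_var_budget_step)
  qed
  then consider
      "\<forall>q\<ge>b. var_ivl (ncmax f) a b + ncmax f b \<le> left_var f q + ncmax f q"
    | m where "m < b" "var_ivl (ncmax f) a b + ncmax f m \<le> left_var f m + ncmax f b"
    unfolding ncmax_var_budget_def by blast
  then show ?thesis
  proof cases
    case 1
    then have "var_ivl (ncmax f) a b + ncmax f b \<le> left_var f b + ncmax f b" by blast
    then show ?thesis using left_var_add_right_var_le[of b] right_var_nonneg[of b] by linarith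
  next
    case 2
    then show ?thesis
      using left_var_add_right_var_le[of m] ncmax_le_ncmax_add_right_var[of m b] by linarith
  qed
qed

end

theorem Var_ncmax_le:
  assumes "Var f < \<infinity>"
  shows "Var (ncmax f) \<le> Var f"
proof -
  interpret bounded_variation f "enn2real (Var f)"
    by unfold_locales (rule var_ivl_le_Var[OF assms])
  have "Var (ncmax f) \<le> ennreal (enn2real (Var f))"
    by (rule Var_le_if_var_ivl_le) (rule var_ivl_ncmax_le)
  then show ?thesis using assms by simp
qed

section \<open>Sharpness: the unit impulse\<close>

lemma Var_impulse: "Var (indicator {0} :: int \<Rightarrow> real) = 2"
proof -
  have "Var (indicator {0} :: int \<Rightarrow> real)
      = (\<Sum>n\<in>{-1, 0::int}. ennreal \<bar>indicator {0} (n + 1) - indicator {0} n\<bar>)"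
    unfolding Var_def by (rule nn_integral_count_space') (auto split: split_indicator)
  then show ?thesis by simp
qed

lemma ncmax_impulse_le: "ncmax (indicator {0} :: int \<Rightarrow> real) n \<le> 1 / real_of_int (\<bar>n\<bar> + 1)"
proof (rule ncmax_le_if_mean_abs_le)
  fix lo hi assume window: "lo \<le> n" "n \<le> hi"
  have sum_eq: "(\<Sum>k = lo..hi. \<bar>indicator {0} k :: real\<bar>) = (if lo \<le> 0 \<and> 0 \<le> hi then 1 else 0)"
    by (simp add: indicator_def of_bool_def sum.delta)
  show "mean_abs (indicator {0}) lo hi \<le> 1 / real_of_int (\<bar>n\<bar> + 1)"
  proof (cases "lo \<le> 0 \<and> 0 \<le> hi")
    case True
    then have "\<bar>n\<bar> + 1 \<le> hi - lo + 1" using window by (simp add: abs_if)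
    then have "real_of_int (\<bar>n\<bar> + 1) \<le> real_of_int (hi - lo + 1)" by (simp only: of_int_le_iff)
    have "mean_abs (indicator {0}) lo hi = 1 / real_of_int (hi - lo + 1)"
      unfolding mean_abs_def sum_eq using True by simp
    also have "\<dots> \<le> 1 / real_of_int (\<bar>n\<bar> + 1)"
      using \<open>real_of_int (\<bar>n\<bar> + 1) \<le> _\<close> by (rule divide_left_mono) (use window in auto)
    finally show ?thesis .
  next
    case False
    then show ?thesis unfolding mean_abs_def sum_eq by auto
  qed
qed

lemma var_ivl_ncmax_impulse_ge:
  "2 - 2 / real (N + 1) \<le> var_ivl (ncmax (indicator {0} :: int \<Rightarrow> real)) (- int N) (int N)"
proof -
  let ?g = "ncmax (indicator {0} :: int \<Rightarrow> real)"
  interpret bounded_variation "indicator {0} :: int \<Rightarrow> real" 2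
    by unfold_locales (use var_ivl_le_Var[of "indicator {0}"] Var_impulse in simp)
  have "1 \<le> ?g 0" using abs_le_ncmax[of 0] by simp
  moreover have "?g (- int N) \<le> 1 / real (N + 1)" "?g (int N) \<le> 1 / real (N + 1)"
    using ncmax_impulse_le[of "- int N"] ncmax_impulse_le[of "int N"] by (simp_all add: add.commute)
  moreover have "\<bar>?g 0 - ?g (- int N)\<bar> \<le> var_ivl ?g (- int N) 0"
    and "\<bar>?g (int N) - ?g 0\<bar> \<le> var_ivl ?g 0 (int N)"
    by (simp_all add: abs_diff_le_var_ivl)
  moreover have "var_ivl ?g (- int N) 0 + var_ivl ?g 0 (int N) = var_ivl ?g (- int N) (int N)"
    by (simp add: var_ivl_split)
  moreover have "2 / real (N + 1) = 2 * (1 / real (N + 1))" by simp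
  ultimately show ?thesis by linarith
qed

theorem Var_ncmax_constant_optimal:
  "\<not> (\<exists>C :: real. C < 1 \<and>
        (\<forall>f :: int \<Rightarrow> real. Var f < \<infinity> \<longrightarrow> Var (ncmax f) \<le> ennreal C * Var f))"
proof
  assume "\<exists>C :: real. C < 1 \<and> (\<forall>f :: int \<Rightarrow> real. Var f < \<infinity> \<longrightarrow> Var (ncmax f) \<le> ennreal C * Var f)"
  then obtain C where "C < 1"
    and H: "\<forall>f :: int \<Rightarrow> real. Var f < \<infinity> \<longrightarrow> Var (ncmax f) \<le> ennreal C * Var f"
    by blast
  let ?M\<delta> = "ncmax (indicator {0} :: int \<Rightarrow> real)"
  have "Var ?M\<delta> \<le> ennreal C * 2" using H[rule_format, of "indicator {0}"] Var_impulse by simp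
  also have "ennreal C * 2 = ennreal (2 * max 0 C)"
    by (metis ennreal_max_0 ennreal_mult ennreal_numeral max.cobounded1 mult.commute zero_le_numeral)
  finally have C: "Var ?M\<delta> \<le> ennreal (2 * max 0 C)" .
  obtain N where N: "inverse (real (Suc N)) < 1 - max 0 C"
    using reals_Archimedean[of "1 - max 0 C"] \<open>C < 1\<close> by auto
  have "ennreal (var_ivl ?M\<delta> (- int N) (int N)) \<le> ennreal (2 * max 0 C)"
    using ennreal_var_ivl_le_Var C by (rule order.trans)
  then have "var_ivl ?M\<delta> (- int N) (int N) \<le> 2 * max 0 C"
    by (simp add: ennreal_le_iff)
  moreover have "2 / real (N + 1) = 2 * inverse (real (Suc N))"
    by (simp add: divide_inverse)
  ultimately show False using var_ivl_ncmax_impulse_ge[of N] N by linarith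
qed

theorem theorem1:
  shows "(\<forall>f :: int \<Rightarrow> real. Var f < \<infinity> \<longrightarrow> Var (ncmax f) \<le> Var f)
       \<and> \<not> (\<exists>C :: real. C < 1 \<and>
              (\<forall>f :: int \<Rightarrow> real. Var f < \<infinity> \<longrightarrow> Var (ncmax f) \<le> ennreal C * Var f))"
  using Var_ncmax_le Var_ncmax_constant_optimal by blast

end
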